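(* There exist absolute constants $C>0$ and $t_0$ such that for all sufficiently large $n$, every integer $t\ge t_0$ and every integer $s$ with $2t\le s\le n/2$, there exists a graph $G$ on $n$ vertices with independence number $$\alpha(G)\le C\, t\Big(\frac{n}{s}\Big)^{2t/(s-t)}\log (n/t)$$ such that every induced subgraph of $G$ on $s$ vertices contains an independent set of size $t$.
   Context: All logarithms are natural. $\alpha(G)$ denotes the maximum size of an independent set in $G$. The $O(\cdot)$ bound of the paper is expressed via an absolute constant. *)

theory Defs
  imports Complex_Main
begin

text \<open>A (simple) graph on the vertex set {0..<n} is given by an edge relation
  E that is symmetric and irreflexive (only its restriction to {0..<n} matters).\<close>

definition simple_graph :: "nat \<Rightarrow> (nat \<Rightarrow> nat \<Rightarrow> bool) \<Rightarrow> bool" where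
  "simple_graph n E \<longleftrightarrow>
     (\<forall>u\<in>{0..<n}. \<forall>v\<in>{0..<n}. E u v \<longleftrightarrow> E v u) \<and> (\<forall>v\<in>{0..<n}. \<not> E v v)"

definition independent_set :: "nat \<Rightarrow> (nat \<Rightarrow> nat \<Rightarrow> bool) \<Rightarrow> nat set \<Rightarrow> bool" where
  "independent_set n E S \<longleftrightarrow> S \<subseteq> {0..<n} \<and> (\<forall>u\<in>S. \<forall>v\<in>S. \<not> E u v)"

definition alpha :: "nat \<Rightarrow> (nat \<Rightarrow> nat \<Rightarrow> bool) \<Rightarrow> nat" where
  "alpha n E = Max {card S | S. independent_set n E S}"

end

theory Submission
  imports Defs "HOL-Library.FuncSet"
begin

text \<open>Colour the pairs of vertices uniformly with \<open>q \<approx> t (n/s)\<^bsup>2t/(s-t)\<^esup>\<close> colours and let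
  colour \<open>0\<close> mark the edges; this is \<open>G(n, 1/q)\<close> in counting form. A union bound gives a
  colouring with no independent set of size \<open>a \<approx> 6 q log(n/t)\<close>, so \<open>\<alpha> < a\<close>, and in which
  no \<open>s\<close>-set spans \<open>k \<approx> s(s-t)/(2t)\<close> edges. An \<open>s\<close>-set with fewer than \<open>k\<close> edges has
  average degree below \<open>s/t - 1\<close>, so Tur\'an's theorem, proved by the minimum-degree greedy
  argument, gives it an independent set of size \<open>t\<close>.\<close>

(* Arithmetic of the greedy step: deleting a vertex of minimum degree together with its
   neighbours removes m vertices and leaves r; the key fact is (x - m^2 - r m)^2 \<ge> 0. *)
lemma turan_step_inequality:
  fixes r m i y x :: nat
  assumes mx: "m * (r + m) \<le> x" and ri: "r^2 \<le> i * y" and yx: "y + m^2 \<le> x"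
  shows "(r + m)^2 \<le> (i + 1) * x"
proof (cases "m^2 < x")
  case True
  define z where "z = real x - real m ^ 2"
  have z: "z > 0" "real r ^ 2 \<le> real i * z"
  proof -
    show "z > 0" using True unfolding z_def by (metis diff_gt_0_iff_gt of_nat_less_iff of_nat_power)
    have "real r ^ 2 \<le> real i * real y" using ri by (metis of_nat_le_iff of_nat_mult of_nat_power)
    also have "\<dots> \<le> real i * z" unfolding z_def using yx by (intro mult_left_mono) (auto simp flip: of_nat_power of_nat_add)
    finally show "real r ^ 2 \<le> real i * z" .
  qed
  have "(real r + real m)^2 * z \<le> real x * z + real x * real r ^ 2"
    using sum_squares_ge_zero[of "z - real r * real m" 0] unfolding z_def
    by (simp add: power2_eq_square algebra_simps)
  also have "\<dots> \<le> real x * z + real x * (real i * z)"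
    using z by (simp add: mult_left_mono)
  also have "\<dots> = (real i + 1) * real x * z" by (simp add: algebra_simps)
  finally have "(real r + real m)^2 \<le> (real i + 1) * real x" using z by simp
  then show ?thesis by (metis of_nat_1 of_nat_add of_nat_le_iff of_nat_mult of_nat_power)
next
  case False
  then have "m * (r + m) \<le> m^2" using mx by linarith
  then have "m * r = 0" by (simp add: power2_eq_square algebra_simps)
  then have "m = 0 \<or> r = 0" by simp
  moreover have "r^2 \<le> i * x" using ri yx by (meson le_trans le_add1 mult_le_mono2)
  ultimately show ?thesis using yx by (auto simp: algebra_simps)
qed

definition arc_count :: "('a \<Rightarrow> 'a \<Rightarrow> bool) \<Rightarrow> 'a set \<Rightarrow> nat" where
  "arc_count E R = card {(u, v). u \<in> R \<and> v \<in> R \<and> E u v}"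

lemma arc_count_eq_sum_degrees:
  assumes "finite R"
  shows "arc_count E R = (\<Sum>w\<in>R. card {y\<in>R. E w y})"
proof -
  have "{(u, v). u \<in> R \<and> v \<in> R \<and> E u v} = Sigma R (\<lambda>w. {y\<in>R. E w y})" by auto
  then show ?thesis unfolding arc_count_def using assms by (simp add: card_SigmaI)
qed

lemma min_degree_le_arc_count:
  assumes "finite R" and "\<And>w. w \<in> R \<Longrightarrow> d \<le> card {y\<in>R. E w y}"
  shows "d * card R \<le> arc_count E R"
proof -
  have "d * card R = (\<Sum>w\<in>R. d)" by simp
  also have "\<dots> \<le> (\<Sum>w\<in>R. card {y\<in>R. E w y})" using assms(2) by (rule sum_mono)
  finally show ?thesis using arc_count_eq_sum_degrees[OF assms(1)] by simp
qed

lemma arc_count_Diff: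
  assumes "finite R" and "X \<subseteq> R" and "\<And>w. w \<in> X \<Longrightarrow> d \<le> card {y\<in>R. E w y}"
  shows "arc_count E (R - X) + card X * d \<le> arc_count E R"
proof -
  define inner where "inner = {(u, v). u \<in> R - X \<and> v \<in> R - X \<and> E u v}"
  define from_X where "from_X = Sigma X (\<lambda>w. {y\<in>R. E w y})"
  have finX: "finite X" using assms(1,2) by (rule finite_subset[rotated])
  have "card X * d = (\<Sum>w\<in>X. d)" by simp
  also have "\<dots> \<le> (\<Sum>w\<in>X. card {y\<in>R. E w y})" using assms(3) by (rule sum_mono)
  also have "\<dots> = card from_X" unfolding from_X_def using finX assms(1) by (simp add: card_SigmaI)
  finally have "card X * d \<le> card from_X" .
  have sub: "inner \<union> from_X \<subseteq> {(u, v). u \<in> R \<and> v \<in> R \<and> E u v}"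
    unfolding inner_def from_X_def using assms(2) by auto
  have fin: "finite {(u, v). u \<in> R \<and> v \<in> R \<and> E u v}"
    by (rule finite_subset[of _ "R \<times> R"]) (use assms(1) in auto)
  have "card inner + card from_X = card (inner \<union> from_X)"
    using finite_subset[OF sub fin] by (intro card_Un_disjoint[symmetric])
      (auto simp: inner_def from_X_def)
  also have "\<dots> \<le> arc_count E R" unfolding arc_count_def using sub fin by (rule card_mono[rotated])
  finally show ?thesis using \<open>card X * d \<le> card from_X\<close> unfolding inner_def arc_count_def
    by linarith
qed

lemma turan_independent_set:
  fixes E :: "'a \<Rightarrow> 'a \<Rightarrow> bool"
  assumes sym: "\<And>u v. E u v = E v u" and irrefl: "\<And>v. \<not> E v v" and "finite R"
  shows "\<exists>I\<subseteq>R. (\<forall>u\<in>I. \<forall>v\<in>I. \<not> E u v) \<and> (card R)^2 \<le> card I * (arc_count E R + card R)"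
  using \<open>finite R\<close>
proof (induction "card R" arbitrary: R rule: less_induct)
  case less
  show ?case
  proof (cases "R = {}")
    case True then show ?thesis by simp
  next
    case False
    define deg where "deg w = card {y\<in>R. E w y}" for w
    obtain v where v: "v \<in> R" and v_min: "\<And>w. w \<in> R \<Longrightarrow> deg v \<le> deg w"
      using arg_min_if_finite[OF less.prems False, of deg] by (metis not_le)
    define X where "X = insert v {y\<in>R. E v y}"
    define R' where "R' = R - X"
    have X_sub: "X \<subseteq> R" unfolding X_def using v by auto
    have card_X: "card X = deg v + 1"
      unfolding X_def deg_def using less.prems irrefl by (simp add: card_insert_if)
    have "card X \<le> card R" using X_sub less.prems by (rule card_mono[rotated])
    then have card_R: "card R = card R' + (deg v + 1)"
      unfolding R'_def using X_sub card_X less.prems by (simp add: card_Diff_subset finite_subset)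
    obtain I' where I': "I' \<subseteq> R'" "\<forall>u\<in>I'. \<forall>w\<in>I'. \<not> E u w"
      and I'_bound: "(card R')^2 \<le> card I' * (arc_count E R' + card R')"
      using less.hyps[of R'] card_R less.prems unfolding R'_def by auto
    have edges_R: "(deg v + 1) * (card R' + (deg v + 1)) \<le> arc_count E R + card R"
      using min_degree_le_arc_count[OF less.prems, of "deg v" E] v_min card_R deg_def by simp
    have edges_R': "arc_count E R' + card R' + (deg v + 1)^2 \<le> arc_count E R + card R"
      using arc_count_Diff[OF less.prems X_sub, of "deg v" E] v_min X_sub card_X card_R
      unfolding R'_def deg_def by (auto simp: power2_eq_square)
    have "(card R' + (deg v + 1))^2 \<le> (card I' + 1) * (arc_count E R + card R)"
      by (rule turan_step_inequality[OF edges_R I'_bound edges_R'])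
    then have bound: "(card R)^2 \<le> (card I' + 1) * (arc_count E R + card R)"
      using card_R by simp
    have "v \<notin> I'" and "\<forall>u\<in>I'. \<not> E v u" using I'(1) unfolding R'_def X_def by auto
    moreover have "finite I'" using I'(1) less.prems unfolding R'_def by (auto intro: finite_subset)
    ultimately have "insert v I' \<subseteq> R \<and> (\<forall>u\<in>insert v I'. \<forall>w\<in>insert v I'. \<not> E u w)
        \<and> card (insert v I') = card I' + 1"
      using I' v irrefl sym unfolding R'_def by auto
    then show ?thesis using bound by metis
  qed
qed

lemma independent_subset_of_sparse:
  fixes E :: "'a \<Rightarrow> 'a \<Rightarrow> bool"
  assumes "\<And>u v. E u v = E v u" and "\<And>v. \<not> E v v" and "finite S"
    and "(t - 1) * (arc_count E S + card S) < (card S)^2" and "1 \<le> t"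
  shows "\<exists>T\<subseteq>S. card T = t \<and> (\<forall>u\<in>T. \<forall>v\<in>T. \<not> E u v)"
proof -
  obtain I where I: "I \<subseteq> S" "\<forall>u\<in>I. \<forall>v\<in>I. \<not> E u v"
    and bound: "(card S)^2 \<le> card I * (arc_count E S + card S)"
    using turan_independent_set[of E, OF assms(1-3)] by blast
  have "t \<le> card I"
  proof (rule ccontr)
    assume "\<not> t \<le> card I"
    then have "card I \<le> t - 1" by simp
    then have "card I * (arc_count E S + card S) \<le> (t - 1) * (arc_count E S + card S)"
      by (rule mult_right_mono) simp
    then show False using bound assms(4) by linarith
  qed
  then obtain T where "T \<subseteq> I" "card T = t" by (rule obtain_subset_with_card_n)
  then show ?thesis using I by blast
qed

lemma alpha_less:
  assumes "\<And>T. T \<subseteq> {0..<n} \<Longrightarrow> card T = a \<Longrightarrow> \<not> independent_set n E T"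
  shows "alpha n E < a"
proof -
  have small: "card S < a" if "independent_set n E S" for S
  proof (rule ccontr)
    assume "\<not> card S < a"
    then obtain T where T: "T \<subseteq> S" "card T = a" by (rule obtain_subset_with_card_n[of a, OF leI])
    with that have "independent_set n E T" by (auto simp: independent_set_def)
    then show False using assms[of T] T(2) unfolding independent_set_def by blast
  qed
  have "{card S | S. independent_set n E S} \<subseteq> {..n}"
    using card_mono[of "{0..<n}"] by (auto simp: independent_set_def)
  then have "finite {card S | S. independent_set n E S}" by (rule finite_subset) simp
  moreover have "independent_set n E {}" by (simp add: independent_set_def)
  ultimately show ?thesis unfolding alpha_def using small by (subst Max_less_iff) auto
qed

definition vertex_pairs :: "nat \<Rightarrow> (nat \<times> nat) set" where
  "vertex_pairs n = {(u, v). u < v \<and> v < n}"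

definition pairs_in :: "nat set \<Rightarrow> (nat \<times> nat) set" where
  "pairs_in T = {(u, v). u \<in> T \<and> v \<in> T \<and> u < v}"

lemma finite_vertex_pairs [simp]: "finite (vertex_pairs n)"
  by (rule finite_subset[of _ "{0..<n} \<times> {0..<n}"]) (auto simp: vertex_pairs_def)

lemma pairs_in_subset_vertex_pairs: "T \<subseteq> {0..<n} \<Longrightarrow> pairs_in T \<subseteq> vertex_pairs n"
  by (auto simp: pairs_in_def vertex_pairs_def)

lemma card_pairs_in:
  assumes "finite T"
  shows "card (pairs_in T) = card T choose 2"
proof -
  have "bij_betw (\<lambda>(u, v). {u, v}) (pairs_in T) {B. B \<subseteq> T \<and> card B = 2}"
  proof (rule bij_betw_imageI)
    show "inj_on (\<lambda>(u, v). {u, v}) (pairs_in T)"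
      by (auto simp: inj_on_def pairs_in_def doubleton_eq_iff)
    have ordered: "{u, v} \<in> (\<lambda>(u, v). {u, v}) ` pairs_in T" if "u \<in> T" "v \<in> T" "u < v" for u v
      using that by (force simp: pairs_in_def)
    have "{u, v} \<in> (\<lambda>(u, v). {u, v}) ` pairs_in T" if "u \<in> T" "v \<in> T" "u \<noteq> v" for u v
      using that ordered[of u v] ordered[of v u] by (cases "u < v") (auto simp: insert_commute)
    then show "(\<lambda>(u, v). {u, v}) ` pairs_in T = {B. B \<subseteq> T \<and> card B = 2}"
      by (auto simp: pairs_in_def card_2_iff)
  qed
  then show ?thesis using n_subsets[OF assms] by (simp add: bij_betw_same_card)
qed

definition colourings :: "nat \<Rightarrow> nat \<Rightarrow> (nat \<times> nat \<Rightarrow> nat) set" where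
  "colourings n q = Pi\<^sub>E (vertex_pairs n) (\<lambda>_. {0..<q})"

lemma card_colourings: "card (colourings n q) = q ^ card (vertex_pairs n)"
  by (simp add: colourings_def card_PiE)

lemma card_colourings_nonzero_on:
  assumes "A \<subseteq> vertex_pairs n" and "1 \<le> q"
  shows "real (card {f \<in> colourings n q. \<forall>x\<in>A. f x \<noteq> 0})
       = real q ^ card (vertex_pairs n) * (1 - 1 / real q) ^ card A"
proof -
  have "{f \<in> colourings n q. \<forall>x\<in>A. f x \<noteq> 0}
      = Pi\<^sub>E (vertex_pairs n) (\<lambda>x. if x \<in> A then {1..<q} else {0..<q})"
    using assms(1) by (auto simp: colourings_def PiE_def Pi_def split: if_splits) (metis Suc_le_eq subsetD)
  then have "card {f \<in> colourings n q. \<forall>x\<in>A. f x \<noteq> 0}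
      = (\<Prod>x\<in>vertex_pairs n. if x \<in> A then q - 1 else q)"
    by (simp add: card_PiE if_distrib cong: if_cong)
  also have "\<dots> = (\<Prod>x\<in>A. q - 1) * (\<Prod>x\<in>vertex_pairs n - A. q)"
    using assms(1) by (subst prod.If_cases) (auto simp: Int_absorb1 Diff_eq)
  also have "\<dots> = (q - 1) ^ card A * q ^ (card (vertex_pairs n) - card A)"
    using assms(1) by (simp add: card_Diff_subset finite_subset)
  finally have "card {f \<in> colourings n q. \<forall>x\<in>A. f x \<noteq> 0}
      = (q - 1) ^ card A * q ^ (card (vertex_pairs n) - card A)" .
  moreover have "real q ^ card (vertex_pairs n) = real q ^ card A * real q ^ (card (vertex_pairs n) - card A)"
    using card_mono[OF finite_vertex_pairs assms(1)] by (simp flip: power_add)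
  moreover have "(1 - 1 / real q) ^ card A * real q ^ card A = (real q - 1) ^ card A"
    using assms(2) by (simp add: power_mult_distrib[symmetric] field_simps)
  ultimately show ?thesis using assms(2) by (simp add: of_nat_diff algebra_simps)
qed

lemma card_colourings_zero_on_le:
  assumes "A \<subseteq> vertex_pairs n" and "1 \<le> q"
  shows "real (card {f \<in> colourings n q. \<forall>x\<in>A. f x = 0})
       \<le> real q ^ card (vertex_pairs n) * (1 / real q) ^ card A"
proof -
  have "{f \<in> colourings n q. \<forall>x\<in>A. f x = 0}
      \<subseteq> Pi\<^sub>E (vertex_pairs n) (\<lambda>x. if x \<in> A then {0} else {0..<q})"
    using assms(1) by (auto simp: colourings_def PiE_def Pi_def split: if_splits)
  then have "card {f \<in> colourings n q. \<forall>x\<in>A. f x = 0}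
      \<le> card (Pi\<^sub>E (vertex_pairs n) (\<lambda>x. if x \<in> A then {0} else {0..<q}))"
    by (intro card_mono) (auto intro!: finite_PiE)
  also have "\<dots> = (\<Prod>x\<in>vertex_pairs n. if x \<in> A then 1 else q)"
    by (simp add: card_PiE if_distrib cong: if_cong)
  also have "\<dots> = (\<Prod>x\<in>A. 1) * (\<Prod>x\<in>vertex_pairs n - A. q)"
    using assms(1) by (subst prod.If_cases) (auto simp: Int_absorb1 Diff_eq)
  also have "\<dots> = q ^ (card (vertex_pairs n) - card A)"
    using assms(1) by (simp add: card_Diff_subset finite_subset)
  finally have "card {f \<in> colourings n q. \<forall>x\<in>A. f x = 0} \<le> q ^ (card (vertex_pairs n) - card A)" .
  then have "real (card {f \<in> colourings n q. \<forall>x\<in>A. f x = 0}) \<le> real q ^ (card (vertex_pairs n) - card A)"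
    by (simp only: of_nat_power[symmetric] of_nat_le_iff)
  moreover have "real q ^ card (vertex_pairs n) = real q ^ card A * real q ^ (card (vertex_pairs n) - card A)"
    using card_mono[OF finite_vertex_pairs assms(1)] by (simp flip: power_add)
  then have "real q ^ (card (vertex_pairs n) - card A) = real q ^ card (vertex_pairs n) * (1 / real q) ^ card A"
    using assms(2) by (simp add: field_simps)
  ultimately show ?thesis by linarith
qed

lemma card_UN_le_card_mult:
  assumes "finite I" and "\<And>i. i \<in> I \<Longrightarrow> real (card (B i)) \<le> b"
  shows "real (card (\<Union>i\<in>I. B i)) \<le> real (card I) * b"
proof -
  have "real (card (\<Union>i\<in>I. B i)) \<le> (\<Sum>i\<in>I. real (card (B i)))"
    using card_UN_le[OF assms(1), of B] by (metis of_nat_le_iff of_nat_sum)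
  also have "\<dots> \<le> real (card I) * b" using sum_bounded_above[of I "\<lambda>i. real (card (B i))" b] assms(2) by simp
  finally show ?thesis .
qed

lemma card_colourings_with_independent_set:
  assumes "1 \<le> q"
  shows "real (card {f \<in> colourings n q. \<exists>T. T \<subseteq> {0..<n} \<and> card T = a \<and> (\<forall>x\<in>pairs_in T. f x \<noteq> 0)})
       \<le> real (n choose a) * (real q ^ card (vertex_pairs n) * (1 - 1 / real q) ^ (a choose 2))"
proof -
  define Ts where "Ts = {T. T \<subseteq> {0..<n} \<and> card T = a}"
  have "{f \<in> colourings n q. \<exists>T. T \<subseteq> {0..<n} \<and> card T = a \<and> (\<forall>x\<in>pairs_in T. f x \<noteq> 0)}
      = (\<Union>T\<in>Ts. {f \<in> colourings n q. \<forall>x\<in>pairs_in T. f x \<noteq> 0})"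
    unfolding Ts_def by auto
  also have "real (card \<dots>) \<le> real (card Ts) * (real q ^ card (vertex_pairs n) * (1 - 1 / real q) ^ (a choose 2))"
  proof (rule card_UN_le_card_mult)
    show "finite Ts" unfolding Ts_def by (rule finite_subset[of _ "Pow {0..<n}"]) auto
    fix T assume "T \<in> Ts"
    then have "pairs_in T \<subseteq> vertex_pairs n" and "card (pairs_in T) = a choose 2"
      unfolding Ts_def
      by (auto simp: pairs_in_subset_vertex_pairs card_pairs_in finite_subset[of _ "{0..<n}"])
    then show "real (card {f \<in> colourings n q. \<forall>x\<in>pairs_in T. f x \<noteq> 0})
        \<le> real q ^ card (vertex_pairs n) * (1 - 1 / real q) ^ (a choose 2)"
      using card_colourings_nonzero_on[OF _ assms] by simp
  qed
  finally show ?thesis unfolding Ts_def using n_subsets[of "{0..<n}" a] by simp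
qed

lemma card_colourings_with_dense_set:
  assumes "1 \<le> q"
  shows "real (card {f \<in> colourings n q. \<exists>S A. S \<subseteq> {0..<n} \<and> card S = s \<and> A \<subseteq> pairs_in S \<and> card A = k
                                              \<and> (\<forall>x\<in>A. f x = 0)})
       \<le> real (n choose s) * (real ((s choose 2) choose k) * (real q ^ card (vertex_pairs n) * (1 / real q) ^ k))"
proof -
  define Ss where "Ss = {S. S \<subseteq> {0..<n} \<and> card S = s}"
  define As where "As S = {A. A \<subseteq> pairs_in S \<and> card A = k}" for S
  have "{f \<in> colourings n q. \<exists>S A. S \<subseteq> {0..<n} \<and> card S = s \<and> A \<subseteq> pairs_in S \<and> card A = k
                                  \<and> (\<forall>x\<in>A. f x = 0)}
      = (\<Union>S\<in>Ss. \<Union>A\<in>As S. {f \<in> colourings n q. \<forall>x\<in>A. f x = 0})"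
    unfolding Ss_def As_def by auto
  also have "real (card \<dots>)
      \<le> real (card Ss) * (real ((s choose 2) choose k) * (real q ^ card (vertex_pairs n) * (1 / real q) ^ k))"
  proof (rule card_UN_le_card_mult)
    show "finite Ss" unfolding Ss_def by (rule finite_subset[of _ "Pow {0..<n}"]) auto
    fix S assume "S \<in> Ss"
    then have S: "pairs_in S \<subseteq> vertex_pairs n" "card (pairs_in S) = s choose 2"
      unfolding Ss_def
      by (auto simp: pairs_in_subset_vertex_pairs card_pairs_in finite_subset[of _ "{0..<n}"])
    then have fin: "finite (pairs_in S)" by (auto intro: finite_subset)
    have "finite (As S)" unfolding As_def
      by (rule finite_subset[of _ "Pow (pairs_in S)"]) (use fin in auto)
    then have "real (card (\<Union>A\<in>As S. {f \<in> colourings n q. \<forall>x\<in>A. f x = 0}))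
        \<le> real (card (As S)) * (real q ^ card (vertex_pairs n) * (1 / real q) ^ k)"
      by (rule card_UN_le_card_mult)
        (use card_colourings_zero_on_le[OF _ assms] S(1) in \<open>auto simp: As_def\<close>)
    then show "real (card (\<Union>A\<in>As S. {f \<in> colourings n q. \<forall>x\<in>A. f x = 0}))
        \<le> real ((s choose 2) choose k) * (real q ^ card (vertex_pairs n) * (1 / real q) ^ k)"
      unfolding As_def using n_subsets[OF fin, of k] S(2) by simp
  qed
  finally show ?thesis unfolding Ss_def using n_subsets[of "{0..<n}" s] by simp
qed

lemma exists_good_colouring:
  assumes "1 \<le> q"
    and "real (n choose a) * (1 - 1 / real q) ^ (a choose 2) < 1/2"
    and "real (n choose s) * real ((s choose 2) choose k) * (1 / real q) ^ k < 1/2"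
  shows "\<exists>f\<in>colourings n q. (\<forall>T. T \<subseteq> {0..<n} \<and> card T = a \<longrightarrow> (\<exists>x\<in>pairs_in T. f x = 0))
     \<and> (\<forall>S A. S \<subseteq> {0..<n} \<and> card S = s \<and> A \<subseteq> pairs_in S \<and> card A = k \<longrightarrow> (\<exists>x\<in>A. f x \<noteq> 0))"
proof -
  define M where "M = real q ^ card (vertex_pairs n)"
  define Bad1 where "Bad1 = {f \<in> colourings n q.
    \<exists>T. T \<subseteq> {0..<n} \<and> card T = a \<and> (\<forall>x\<in>pairs_in T. f x \<noteq> 0)}"
  define Bad2 where "Bad2 = {f \<in> colourings n q.
    \<exists>S A. S \<subseteq> {0..<n} \<and> card S = s \<and> A \<subseteq> pairs_in S \<and> card A = k \<and> (\<forall>x\<in>A. f x = 0)}"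
  have M: "M > 0" unfolding M_def using assms(1) by simp
  have "real (card Bad1) < M / 2"
    using card_colourings_with_independent_set[OF assms(1), of n a] mult_strict_right_mono[OF assms(2) M]
    unfolding Bad1_def M_def by (simp add: algebra_simps)
  moreover have "real (card Bad2) < M / 2"
    using card_colourings_with_dense_set[OF assms(1), of n s k] mult_strict_right_mono[OF assms(3) M]
    unfolding Bad2_def M_def by (simp add: algebra_simps)
  moreover have "real (card (Bad1 \<union> Bad2)) \<le> real (card Bad1) + real (card Bad2)"
    using card_Un_le[of Bad1 Bad2] by linarith
  moreover have "M = real (card (colourings n q))" unfolding M_def card_colourings by simp
  ultimately have less: "card (Bad1 \<union> Bad2) < card (colourings n q)" by linarith
  then have "colourings n q \<noteq> Bad1 \<union> Bad2" by auto
  moreover have "Bad1 \<union> Bad2 \<subseteq> colourings n q" unfolding Bad1_def Bad2_def by blast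
  ultimately have "\<not> colourings n q \<subseteq> Bad1 \<union> Bad2" by blast
  then obtain f where f: "f \<in> colourings n q" "f \<notin> Bad1" "f \<notin> Bad2" by blast
  show ?thesis
  proof (intro bexI[OF _ f(1)] conjI allI impI)
    fix T assume "T \<subseteq> {0..<n} \<and> card T = a"
    then show "\<exists>x\<in>pairs_in T. f x = 0" using f(1,2) unfolding Bad1_def by auto
  next
    fix S A assume "S \<subseteq> {0..<n} \<and> card S = s \<and> A \<subseteq> pairs_in S \<and> card A = k"
    then show "\<exists>x\<in>A. f x \<noteq> 0" using f(1,3) unfolding Bad2_def by auto
  qed
qed

definition colour_graph :: "(nat \<times> nat \<Rightarrow> nat) \<Rightarrow> nat \<Rightarrow> nat \<Rightarrow> bool" where
  "colour_graph f u v \<longleftrightarrow> u \<noteq> v \<and> f (min u v, max u v) = 0"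

lemma colour_graph_sym: "colour_graph f u v = colour_graph f v u"
  by (auto simp: colour_graph_def min_def max_def)

lemma colour_graph_irrefl: "\<not> colour_graph f v v"
  by (simp add: colour_graph_def)

lemma simple_graph_colour_graph: "simple_graph n (colour_graph f)"
  unfolding simple_graph_def using colour_graph_sym colour_graph_irrefl by blast

lemma arc_count_colour_graph:
  assumes "finite S"
  shows "arc_count (colour_graph f) S = 2 * card {x \<in> pairs_in S. f x = 0}"
proof -
  define Z where "Z = {x \<in> pairs_in S. f x = 0}"
  have "finite Z" unfolding Z_def pairs_in_def
    by (rule finite_subset[of _ "S \<times> S"]) (use assms in auto)
  have swap: "inj_on prod.swap Z" by simp
  have "{(u, v). u \<in> S \<and> v \<in> S \<and> colour_graph f u v} = Z \<union> prod.swap ` Z"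
    unfolding Z_def pairs_in_def colour_graph_def
    by (auto simp: min_def max_def image_iff split: if_splits)
  moreover have "Z \<inter> prod.swap ` Z = {}" by (auto simp: Z_def pairs_in_def)
  ultimately show ?thesis unfolding arc_count_def Z_def[symmetric]
    using \<open>finite Z\<close> card_image[OF swap] by (simp add: card_Un_disjoint)
qed

lemma alpha_colour_graph_less:
  assumes "\<forall>T. T \<subseteq> {0..<n} \<and> card T = a \<longrightarrow> (\<exists>x\<in>pairs_in T. f x = 0)"
  shows "alpha n (colour_graph f) < a"
proof (rule alpha_less)
  fix T assume "T \<subseteq> {0..<n}" "card T = a"
  then obtain u v where "u \<in> T" "v \<in> T" "u < v" "f (u, v) = 0"
    using assms by (auto simp: pairs_in_def)
  then have "colour_graph f u v" by (simp add: colour_graph_def)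
  with \<open>u \<in> T\<close> \<open>v \<in> T\<close> show "\<not> independent_set n (colour_graph f) T"
    by (auto simp: independent_set_def)
qed

lemma colour_graph_independent_subset:
  assumes "S \<subseteq> {0..<n}" and "card S = s"
    and sparse: "\<forall>A. A \<subseteq> pairs_in S \<and> card A = k \<longrightarrow> (\<exists>x\<in>A. f x \<noteq> 0)"
    and k: "2 * t * (k - 1) \<le> s * (s - t)" and "1 \<le> t" and "2 * t \<le> s"
  shows "\<exists>T\<subseteq>S. card T = t \<and> independent_set n (colour_graph f) T"
proof -
  have fin: "finite S" using assms(1) by (rule finite_subset) simp
  have "card {x \<in> pairs_in S. f x = 0} < k"
  proof (rule ccontr)
    assume "\<not> ?thesis"
    then obtain A where A: "A \<subseteq> {x \<in> pairs_in S. f x = 0}" "card A = k"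
      by (rule obtain_subset_with_card_n[of k, OF leI])
    then have "A \<subseteq> pairs_in S" by blast
    then obtain x where "x \<in> A" "f x \<noteq> 0" using sparse A(2) by blast
    then show False using A(1) by auto
  qed
  then have "arc_count (colour_graph f) S \<le> 2 * (k - 1)"
    using arc_count_colour_graph[OF fin] by simp
  then have "(t - 1) * (arc_count (colour_graph f) S + s) \<le> (t - 1) * (2 * (k - 1) + s)"
    by simp
  also have "\<dots> < t * (2 * (k - 1) + s)"
    using assms(5,6) by (intro mult_strict_right_mono) auto
  also have "\<dots> = 2 * t * (k - 1) + t * s" by (simp add: algebra_simps)
  also have "\<dots> \<le> s * (s - t) + t * s" using k by simp
  also have "\<dots> = s^2" using assms(6) by (simp add: power2_eq_square diff_mult_distrib2)
  finally have "(t - 1) * (arc_count (colour_graph f) S + card S) < (card S)^2"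
    using assms(2) by simp
  then obtain T where "T \<subseteq> S" "card T = t" "\<forall>u\<in>T. \<forall>v\<in>T. \<not> colour_graph f u v"
    using independent_subset_of_sparse[of "colour_graph f", OF colour_graph_sym colour_graph_irrefl fin _ assms(5)] by blast
  then show ?thesis using assms(1) unfolding independent_set_def by (intro exI[of _ T]) auto
qed

lemma power_div_fact_le_exp:
  fixes x :: real
  assumes "0 \<le> x"
  shows "x ^ n / fact n \<le> exp x"
proof -
  have "(\<Sum>m\<in>{n}. x ^ m /\<^sub>R fact m) \<le> (\<Sum>m. x ^ m /\<^sub>R fact m)"
    using assms summable_exp_generic[of x] by (intro sum_le_suminf) auto
  then show ?thesis by (simp add: exp_def divide_inverse ac_simps)
qed

lemma binomial_le_exp_pow:
  assumes "1 \<le> k"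
  shows "real (n choose k) \<le> (exp 1 * real n / real k) ^ k"
proof -
  have binomial_fact: "real (n choose k) * fact k \<le> real n ^ k"
    using binomial_fact_pow[of n k] by (metis of_nat_fact of_nat_le_iff of_nat_mult of_nat_power)
  have "real k ^ k \<le> exp 1 ^ k * fact k"
    using power_div_fact_le_exp[of "real k" k] by (simp add: exp_of_nat_mult[symmetric] divide_le_eq)
  then have "real (n choose k) * real k ^ k \<le> real (n choose k) * (exp 1 ^ k * fact k)"
    by (rule mult_left_mono) simp
  also have "\<dots> = exp 1 ^ k * (real (n choose k) * fact k)" by simp
  also have "\<dots> \<le> exp 1 ^ k * real n ^ k" using binomial_fact by (simp add: mult_left_mono)
  finally have "real (n choose k) * real k ^ k \<le> (exp 1 * real n) ^ k"
    by (simp add: power_mult_distrib)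
  then show ?thesis using assms by (simp add: power_divide pos_le_divide_eq)
qed

lemma real_choose_two: "real (a choose 2) = real a * (real a - 1) / 2"
proof -
  have "even (a * (a - 1))" by auto
  then have "2 * (a choose 2) = a * (a - 1)" by (simp add: choose_two)
  then have "2 * real (a choose 2) = real a * real (a - 1)" by (metis of_nat_mult of_nat_numeral)
  then show ?thesis by (cases a) auto
qed

lemma exp_one_gt_two: "2 < exp (1::real)"
proof -
  have "(1 + 1/2) * (1 + 1/2) \<le> exp (1/2) * exp (1/2::real)"
    using exp_ge_add_one_self[of "1/2"] by (intro mult_mono) auto
  then show ?thesis by (simp flip: exp_add)
qed

lemma binomial_le_exp_ln:
  assumes "1 \<le> t" and "t \<le> a" and "0 < n"
  shows "real (n choose a) \<le> exp (real a * (1 + ln (real n / real t)))"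
proof -
  have "real (n choose a) \<le> (exp 1 * real n / real a) ^ a"
    using assms by (intro binomial_le_exp_pow) simp
  also have "\<dots> \<le> (exp 1 * real n / real t) ^ a"
    using assms by (intro power_mono divide_left_mono) auto
  also have "\<dots> = exp (real a * (1 + ln (real n / real t)))"
    using assms by (simp add: exp_of_nat_mult exp_add)
  finally show ?thesis .
qed

lemma one_minus_inverse_power_le_exp:
  fixes q :: real
  assumes "1 \<le> q"
  shows "(1 - 1 / q) ^ m \<le> exp (- real m / q)"
proof -
  have "(1 - 1 / q) ^ m \<le> exp (- 1 / q) ^ m"
    using exp_ge_add_one_self[of "- 1 / q"] assms by (intro power_mono) auto
  also have "\<dots> = exp (- real m / q)" by (simp flip: exp_of_nat_mult)
  finally show ?thesis .
qed

lemma one_le_ln_div: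
  assumes "1 \<le> t" and "4 * real t \<le> real n"
  shows "1 \<le> ln (real n / real t)"
proof -
  have "real t * exp 1 \<le> real t * 4" using exp_le by (intro mult_left_mono) auto
  then have "real t * exp 1 \<le> real n" using assms(2) by linarith
  then have "exp 1 \<le> real n / real t" using assms(1) by (simp add: field_simps)
  then show ?thesis using assms by (metis exp_gt_zero ln_exp ln_le_cancel_iff order_less_le_trans)
qed

lemma expected_independent_sets_lt_half:
  fixes n a t :: nat and q :: real
  assumes "1 \<le> t" and tn: "4 * real t \<le> real n" and "1 \<le> q" and "t \<le> a"
    and aq: "6 * q * ln (real n / real t) \<le> real a - 1"
  shows "real (n choose a) * (1 - 1 / q) ^ (a choose 2) < 1/2"
proof -
  define x where "x = real n / real t"
  define L where "L = ln x"
  have x: "4 \<le> x" unfolding x_def using tn assms(1) by (simp add: field_simps)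
  then have exp_L: "exp L = x" unfolding L_def by simp
  have L: "1 \<le> L" unfolding L_def x_def using one_le_ln_div[OF assms(1) tn] .
  have a: "1 \<le> a" using assms(1,4) by simp
  have "3 * real a * L \<le> real (a choose 2) / q"
  proof -
    have "real a * (6 * q * L) \<le> real a * (real a - 1)"
      using aq unfolding L_def x_def by (intro mult_left_mono) auto
    then show ?thesis using assms(3) unfolding real_choose_two by (simp add: field_simps)
  qed
  then have "exp (- real (a choose 2) / q) \<le> exp (- (3 * real a * L))" by simp
  with one_minus_inverse_power_le_exp[OF assms(3)]
  have "(1 - 1 / q) ^ (a choose 2) \<le> exp (- (3 * real a * L))" by (rule order_trans)
  moreover have "real (n choose a) \<le> exp (real a * (1 + L))"
    unfolding L_def x_def using binomial_le_exp_ln[OF assms(1,4)] tn assms(1) by simp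
  ultimately have "real (n choose a) * (1 - 1 / q) ^ (a choose 2)
      \<le> exp (real a * (1 + L)) * exp (- (3 * real a * L))"
    using assms(3) by (intro mult_mono) auto
  also have "\<dots> = exp (real a * (1 - 2 * L))" by (simp flip: exp_add) (simp add: algebra_simps)
  also have "\<dots> \<le> exp (1 - 2 * L)" using a L by (simp add: mult_le_cancel_right1)
  also have "\<dots> = exp 1 / (x * x)"
  proof -
    have "exp (2 * L) = x * x" using exp_L by (metis exp_add mult_2)
    then show ?thesis using exp_diff[of 1 "2 * L"] by simp
  qed
  also have "\<dots> \<le> 3 / 16"
  proof -
    have "4 * 4 \<le> x * x" by (rule mult_mono) (use x in auto)
    then have "3 / (x * x) \<le> 3 / 16" by (intro divide_left_mono) auto
    moreover have "exp 1 / (x * x) \<le> 3 / (x * x)" by (rule divide_right_mono) (use exp_le in auto)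
    ultimately show ?thesis by linarith
  qed
  finally show ?thesis by simp
qed

lemma choose_pairs_le:
  assumes "real s * (real s - real t) \<le> 2 * real k * real t" and "2 * t \<le> s" and "1 \<le> k"
  shows "real ((s choose 2) choose k) \<le> (2 * exp 1 * real t) ^ k"
proof -
  have "real s \<le> 2 * (real s - real t)" using assms(2) by simp
  then have "real s * real s \<le> real s * (2 * (real s - real t))" by (rule mult_left_mono) simp
  then have "real (s choose 2) \<le> real s * (real s - real t)"
    unfolding real_choose_two by (simp add: field_simps)
  then have "exp 1 * real (s choose 2) / real k \<le> 2 * exp 1 * real t"
    using assms(1,3) by (simp add: field_simps)
  then have "(exp 1 * real (s choose 2) / real k) ^ k \<le> (2 * exp 1 * real t) ^ k"
    by (intro power_mono) auto
  with binomial_le_exp_pow[OF assms(3)] show ?thesis by (rule order_trans)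
qed

lemma power_le_powr_power:
  fixes B b :: real
  assumes "1 \<le> B" and "real s \<le> b * real k"
  shows "B ^ s \<le> (B powr b) ^ k"
proof -
  have "B ^ s = B powr real s" using assms(1) by (simp add: powr_realpow)
  also have "\<dots> \<le> B powr (b * real k)" using assms by (intro powr_mono) auto
  also have "\<dots> = (B powr b) ^ k" using assms(1) by (simp add: powr_realpow[symmetric] powr_powr)
  finally show ?thesis .
qed

lemma expected_dense_sets_lt_half:
  fixes n s t k :: nat and q :: real
  assumes "1 \<le> t" and "2 * t \<le> s" and "real s \<le> real n / 2"
    and q: "2 * exp 2 * real t * (exp 1 * real n / real s) powr (2 * real t / (real s - real t)) \<le> q"
    and k: "real s * (real s - real t) \<le> 2 * real k * real t" and "1 \<le> k"
  shows "real (n choose s) * real ((s choose 2) choose k) * (1 / q) ^ k < 1/2"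
proof -
  define B where "B = exp 1 * real n / real s"
  define b where "b = 2 * real t / (real s - real t)"
  define R where "R = B powr b"
  have st: "0 < real t" "real t < real s" using assms(1,2) by auto
  have "1 * 1 \<le> exp 1 * (real n / real s)"
    using assms(3) st by (intro mult_mono) (auto simp: field_simps)
  then have B: "1 \<le> B" unfolding B_def by simp
  then have R: "1 \<le> R" unfolding R_def b_def using st by (simp add: ge_one_powr_ge_zero)
  have "real s \<le> b * real k" using k st unfolding b_def by (simp add: field_simps)
  (* This is what the exponent 2t/(s-t) in the number of colours is chosen for. *)
  with B have Rk: "B ^ s \<le> R ^ k" unfolding R_def by (rule power_le_powr_power)
  have qR: "2 * exp 2 * real t * R \<le> q" using q unfolding R_def B_def b_def .
  moreover have "0 < 2 * exp 2 * real t * R" using R st by simp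
  ultimately have "0 < q" by linarith
  have "2 * exp 1 * real t / q \<le> 2 * exp 1 * real t / (2 * exp 2 * real t * R)"
    using qR R st \<open>0 < q\<close> by (intro divide_left_mono) auto
  also have "\<dots> = 1 / (exp 1 * R)"
    using st R by (simp add: exp_add[of 1 1, simplified] field_simps)
  finally have "(2 * exp 1 * real t / q) ^ k \<le> (1 / (exp 1 * R)) ^ k"
    using st \<open>0 < q\<close> by (intro power_mono) auto
  moreover have "real ((s choose 2) choose k) * (1 / q) ^ k \<le> (2 * exp 1 * real t / q) ^ k"
    using choose_pairs_le[OF k assms(2,6)] \<open>0 < q\<close>
    by (simp add: power_divide divide_right_mono)
  moreover have "real (n choose s) \<le> B ^ s"
    unfolding B_def using binomial_le_exp_pow[of s n] assms(1,2) by simp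
  ultimately have "real (n choose s) * (real ((s choose 2) choose k) * (1 / q) ^ k)
      \<le> B ^ s * (1 / (exp 1 * R)) ^ k"
    using B \<open>0 < q\<close> by (intro mult_mono) auto
  also have "\<dots> = B ^ s / R ^ k * (1 / exp 1) ^ k" by (simp add: power_mult_distrib field_simps)
  also have "\<dots> \<le> 1 * (1 / exp 1) ^ 1"
    using Rk R assms(6) by (intro mult_mono power_decreasing) auto
  also have "\<dots> < 1/2" using exp_one_gt_two by (simp add: field_simps)
  finally show ?thesis by (simp add: mult.assoc)
qed

lemma exists_graph_by_union_bound:
  assumes "1 \<le> q"
    and "real (n choose a) * (1 - 1 / real q) ^ (a choose 2) < 1/2"
    and "real (n choose s) * real ((s choose 2) choose k) * (1 / real q) ^ k < 1/2"
    and "2 * t * (k - 1) \<le> s * (s - t)" and "1 \<le> t" and "2 * t \<le> s"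
  shows "\<exists>E. simple_graph n E \<and> alpha n E < a \<and>
     (\<forall>S. S \<subseteq> {0..<n} \<and> card S = s \<longrightarrow> (\<exists>T. T \<subseteq> S \<and> card T = t \<and> independent_set n E T))"
proof -
  obtain f :: "nat \<times> nat \<Rightarrow> nat" where dense: "\<forall>T. T \<subseteq> {0..<n} \<and> card T = a \<longrightarrow> (\<exists>x\<in>pairs_in T. f x = 0)"
    and sparse: "\<forall>S A. S \<subseteq> {0..<n} \<and> card S = s \<and> A \<subseteq> pairs_in S \<and> card A = k \<longrightarrow> (\<exists>x\<in>A. f x \<noteq> 0)"
    using exists_good_colouring[OF assms(1-3)] by blast
  show ?thesis
  proof (intro exI[of _ "colour_graph f"] conjI allI impI)
    show "simple_graph n (colour_graph f)" by (rule simple_graph_colour_graph)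
    show "alpha n (colour_graph f) < a" using dense by (rule alpha_colour_graph_less)
    fix S assume "S \<subseteq> {0..<n} \<and> card S = s"
    then show "\<exists>T. T \<subseteq> S \<and> card T = t \<and> independent_set n (colour_graph f) T"
      using colour_graph_independent_subset[OF _ _ _ assms(4-6), of S n f] sparse by blast
  qed
qed

lemma exists_graph_for_colour_count:
  fixes n s t q :: nat
  assumes t: "1 \<le> t" and ts: "2 * t \<le> s" and sn: "real s \<le> real n / 2"
    and q: "2 * exp 2 * real t * (exp 1 * real n / real s) powr (2 * real t / (real s - real t)) \<le> real q"
    and "t \<le> q"
  shows "\<exists>E. simple_graph n E \<and> real (alpha n E) \<le> 6 * real q * ln (real n / real t) + 1 \<and>
     (\<forall>S. S \<subseteq> {0..<n} \<and> card S = s \<longrightarrow> (\<exists>T. T \<subseteq> S \<and> card T = t \<and> independent_set n E T))"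
proof -
  define L where "L = ln (real n / real t)"
  define a where "a = nat \<lceil>6 * real q * L\<rceil> + 1"
  define k where "k = s * (s - t) div (2 * t) + 1"
  have tn: "4 * real t \<le> real n" using ts sn by simp
  have L: "1 \<le> L" unfolding L_def using one_le_ln_div[OF t tn] .
  have qt: "t \<le> q" "1 \<le> q" using \<open>t \<le> q\<close> t by auto
  have "0 \<le> 6 * real q * L" using L by simp
  then have a: "6 * real q * L \<le> real a - 1" "real a - 1 \<le> 6 * real q * L + 1"
    unfolding a_def by linarith+
  have "real q * 1 \<le> real q * L" using L by (intro mult_left_mono) auto
  then have "real t \<le> 6 * real q * L" using qt(1) by linarith
  then have "t \<le> a" using a(1) by linarith
  have "s * (s - t) < k * (2 * t)" unfolding k_def using t by (simp add: dividend_less_div_times)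
  then have "real (s * (s - t)) \<le> real (k * (2 * t))" by linarith
  then have k: "real s * (real s - real t) \<le> 2 * real k * real t"
    using ts by (simp add: of_nat_diff algebra_simps)
  have "2 * t * (k - 1) \<le> s * (s - t)" unfolding k_def by simp
  moreover have "real (n choose a) * (1 - 1 / real q) ^ (a choose 2) < 1/2"
    using expected_independent_sets_lt_half[OF t tn _ \<open>t \<le> a\<close>] qt a(1) unfolding L_def by simp
  moreover have "real (n choose s) * real ((s choose 2) choose k) * (1 / real q) ^ k < 1/2"
    using expected_dense_sets_lt_half[OF t ts sn q k] unfolding k_def by simp
  ultimately obtain E where E: "simple_graph n E" "alpha n E < a"
    "\<forall>S. S \<subseteq> {0..<n} \<and> card S = s \<longrightarrow> (\<exists>T. T \<subseteq> S \<and> card T = t \<and> independent_set n E T)"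
    using exists_graph_by_union_bound[OF qt(2) _ _ _ t ts] by blast
  have "real (alpha n E) \<le> 6 * real q * ln (real n / real t) + 1"
    using E(2) a(2) unfolding L_def by linarith
  with E(1,3) show ?thesis by (intro exI[of _ E] conjI)
qed

lemma exists_colour_count:
  assumes t: "1 \<le> t" and ts: "2 * t \<le> s" and sn: "real s \<le> real n / 2"
  shows "\<exists>q::nat. t \<le> q
    \<and> 2 * exp 2 * real t * (exp 1 * real n / real s) powr (2 * real t / (real s - real t)) \<le> real q
    \<and> real q \<le> 4 * exp 4 * real t * (real n / real s) powr (2 * real t / (real s - real t))"
proof -
  define b where "b = 2 * real t / (real s - real t)"
  define Q where "Q = (real n / real s) powr b"
  define x where "x = 2 * exp 2 * real t * (exp 1 * real n / real s) powr b"
  have b: "0 \<le> b" "b \<le> 2" unfolding b_def using t ts by (auto simp: field_simps)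
  have "2 \<le> real n / real s" using sn ts t by (simp add: field_simps)
  then have Q: "1 \<le> Q" unfolding Q_def using b by (simp add: ge_one_powr_ge_zero)
  have "(exp 1 * real n / real s) powr b = exp 1 powr b * Q"
    unfolding Q_def by (simp add: powr_mult flip: times_divide_eq_right)
  then have x_eq: "x = 2 * exp 2 * exp b * real t * Q" unfolding x_def by (simp add: powr_def)
  have "1 * 1 * 1 \<le> exp 2 * exp b * Q" using b Q by (intro mult_mono) auto
  then have "real t * 1 \<le> real t * (exp 2 * exp b * Q)" by (intro mult_left_mono) auto
  moreover have "x = 2 * (real t * (exp 2 * exp b * Q))" unfolding x_eq by (simp add: ac_simps)
  ultimately have x: "real t \<le> x" "1 \<le> x" using t by linarith+
  have "exp b \<le> exp 2" using b by simp
  then have "2 * x \<le> 2 * (2 * exp 2 * exp 2 * real t * Q)"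
    unfolding x_eq using t Q by (intro mult_left_mono mult_right_mono) auto
  also have "\<dots> = 4 * exp 4 * real t * Q" by (simp add: exp_add[of 2 2, simplified])
  finally have "real (nat \<lceil>x\<rceil>) \<le> 4 * exp 4 * real t * Q" using x by linarith
  moreover have "x \<le> real (nat \<lceil>x\<rceil>)" by linarith
  moreover from this have "t \<le> nat \<lceil>x\<rceil>" using x(1) by linarith
  ultimately show ?thesis unfolding x_def Q_def b_def by blast
qed

theorem theorem2p3:
  shows "\<exists>C::real. C > 0 \<and> (\<exists>t0::nat. \<exists>N::nat. \<forall>n\<ge>N. \<forall>t s::nat.
     t \<ge> t0 \<longrightarrow> 2 * t \<le> s \<longrightarrow> real s \<le> real n / 2 \<longrightarrow>
     (\<exists>E. simple_graph n E \<and>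
        real (alpha n E) \<le> C * real t * (real n / real s) powr (2 * real t / (real s - real t))
                             * ln (real n / real t) \<and>
        (\<forall>S. S \<subseteq> {0..<n} \<and> card S = s \<longrightarrow>
             (\<exists>T. T \<subseteq> S \<and> card T = t \<and> independent_set n E T))))"
proof (intro exI[of _ "24 * exp 4 + 1"] conjI exI[of _ "1::nat"] exI[of _ "0::nat"] allI impI)
  show "(0::real) < 24 * exp 4 + 1" by (simp add: add_pos_pos)
  fix n t s :: nat
  assume t: "1 \<le> t" and ts: "2 * t \<le> s" and sn: "real s \<le> real n / 2"
  define Q where "Q = (real n / real s) powr (2 * real t / (real s - real t))"
  define L where "L = ln (real n / real t)"
  obtain q :: nat where q: "t \<le> q" "2 * exp 2 * real t * (exp 1 * real n / real s) powr (2 * real t / (real s - real t)) \<le> real q"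
    "real q \<le> 4 * exp 4 * real t * Q"
    using exists_colour_count[OF t ts sn] unfolding Q_def by blast
  obtain E where E: "simple_graph n E" "real (alpha n E) \<le> 6 * real q * L + 1"
    "\<forall>S. S \<subseteq> {0..<n} \<and> card S = s \<longrightarrow> (\<exists>T. T \<subseteq> S \<and> card T = t \<and> independent_set n E T)"
    using exists_graph_for_colour_count[OF t ts sn q(2,1)] unfolding L_def by blast
  have "2 \<le> real n / real s" using sn ts t by (simp add: field_simps)
  then have "1 \<le> Q" unfolding Q_def using ts by (simp add: ge_one_powr_ge_zero)
  moreover have "1 \<le> L" unfolding L_def using one_le_ln_div t ts sn by simp
  ultimately have tQL: "1 * 1 * 1 \<le> real t * Q * L" using t by (intro mult_mono) auto
  have "real (alpha n E) \<le> 6 * (4 * exp 4 * real t * Q) * L + 1"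
    using E(2) \<open>1 \<le> L\<close> mult_right_mono[OF q(3), of L] by linarith
  also have "\<dots> \<le> (24 * exp 4 + 1) * real t * Q * L" using tQL by (simp add: algebra_simps)
  finally show "\<exists>E. simple_graph n E \<and>
      real (alpha n E) \<le> (24 * exp 4 + 1) * real t * (real n / real s) powr (2 * real t / (real s - real t))
                           * ln (real n / real t) \<and>
      (\<forall>S. S \<subseteq> {0..<n} \<and> card S = s \<longrightarrow> (\<exists>T. T \<subseteq> S \<and> card T = t \<and> independent_set n E T))"
    using E(1,3) unfolding Q_def L_def by (intro exI[of _ E] conjI) (simp_all add: mult.assoc)
qed

end
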